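(* For every $k\in\mathbb{N}$ there exists a 2-coloring of the edges of $K_\mathbb{N}$ such that every set $X\subseteq\mathbb{N}$ which is $k$-wise self-intersecting in some color has upper density at most $1/(2k)$.
   Context: For a 2-coloring of $K_\mathbb{N}$ (vertex set $\mathbb{N}$) and a color $i$, let $N_i(v)$ be the set of vertices joined to $v$ by an edge of color $i$, and for finite nonempty $S$ let $N_i^\cap(S)=\bigcap_{v\in S}N_i(v)$. A set $X\subseteq\mathbb{N}$ is $k$-wise self-intersecting in color $i$ if for every nonempty $S\subseteq X$ with $|S|\le k$, the set $X\cap N_i^\cap(S)$ is infinite. Upper density: $\overline{d}(X)=\limsup_{t\to\infty}|X\cap\{1,\dots,t\}|/t$. *)

theory Defs
  imports Complex_Main "HOL-Library.Liminf_Limsup" "HOL-Library.Extended_Real"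
begin

text \<open>A 2-colouring of the edges of the complete graph on \<nat> is a symmetric
  function c :: nat \<Rightarrow> nat \<Rightarrow> bool; the colour of edge {u,v} (u \<noteq> v) is c u v.
  Values on the diagonal are irrelevant.\<close>

definition two_coloring :: "(nat \<Rightarrow> nat \<Rightarrow> bool) \<Rightarrow> bool" where
  "two_coloring c \<longleftrightarrow> (\<forall>u v. c u v = c v u)"

definition nbhd :: "(nat \<Rightarrow> nat \<Rightarrow> bool) \<Rightarrow> bool \<Rightarrow> nat \<Rightarrow> nat set" where
  "nbhd c i v = {u. u \<noteq> v \<and> c v u = i}"

definition common_nbhd :: "(nat \<Rightarrow> nat \<Rightarrow> bool) \<Rightarrow> bool \<Rightarrow> nat set \<Rightarrow> nat set" where
  "common_nbhd c i S = (\<Inter>v\<in>S. nbhd c i v)"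

definition kwise_self_intersecting ::
  "(nat \<Rightarrow> nat \<Rightarrow> bool) \<Rightarrow> bool \<Rightarrow> nat \<Rightarrow> nat set \<Rightarrow> bool" where
  "kwise_self_intersecting c i k X \<longleftrightarrow>
     (\<forall>S. S \<subseteq> X \<and> S \<noteq> {} \<and> finite S \<and> card S \<le> k \<longrightarrow> infinite (X \<inter> common_nbhd c i S))"

definition upper_density :: "nat set \<Rightarrow> ereal" where
  "upper_density X = limsup (\<lambda>t. ereal (real (card (X \<inter> {1..t})) / real t))"

end

theory Submission
  imports Defs
begin

text \<open>Colour an edge by the residues of its endpoints modulo 2k. If the larger endpoint lies
  in the lower half of the residues, colour True joins equal residues; if it lies in the upper
  half, colour True joins different residues. Now let X be k-wise self-intersecting in colour i.
  Elements of X in the "wrong" half for i are excluded: representatives of the (at most k)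
  residues of X in that half would have no common i-neighbour far out in X. Inside the right half
  colour i joins only equal residues, so two elements of X with different residues would again
  have no common i-neighbour far out. Hence X lies in one residue class modulo 2k, and its upper
  density is at most 1/(2k).\<close>

definition residue_coloring :: "nat \<Rightarrow> nat \<Rightarrow> nat \<Rightarrow> bool" where
  "residue_coloring k u v \<longleftrightarrow> (u mod (2*k) = v mod (2*k)) = (max u v mod (2*k) < k)"

lemma two_coloring_residue_coloring: "two_coloring (residue_coloring k)"
  unfolding two_coloring_def residue_coloring_def by (auto simp: max.commute)

lemma residue_coloring_less_eq:
  assumes "s < x"
  shows "residue_coloring k s x = i \<longleftrightarrow>
           (s mod (2*k) = x mod (2*k)) = ((x mod (2*k) < k) = i)"
  using assms unfolding residue_coloring_def by (auto simp: max_def)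

lemma not_kwise_self_intersecting_if_blocked:
  assumes "S \<subseteq> X" "S \<noteq> {}" "finite S" "card S \<le> k"
    and blocked: "\<And>x. x \<in> X \<Longrightarrow> \<forall>s\<in>S. s < x \<Longrightarrow> \<exists>s\<in>S. c s x \<noteq> i"
  shows "\<not> kwise_self_intersecting c i k X"
proof
  assume K: "kwise_self_intersecting c i k X"
  have "X \<inter> common_nbhd c i S \<subseteq> {..Max S}"
  proof
    fix x assume x: "x \<in> X \<inter> common_nbhd c i S"
    have "\<not> (\<forall>s\<in>S. s < x)"
    proof
      assume "\<forall>s\<in>S. s < x"
      then obtain s where "s \<in> S" "c s x \<noteq> i" using blocked x by blast
      moreover have "x \<in> nbhd c i s" using x \<open>s \<in> S\<close> unfolding common_nbhd_def by blast
      ultimately show False unfolding nbhd_def by simp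
    qed
    then obtain s where "s \<in> S" "x \<le> s" by (auto simp: not_less)
    then show "x \<in> {..Max S}" using \<open>finite S\<close> by (meson Max_ge atMost_iff order_trans)
  qed
  then have "finite (X \<inter> common_nbhd c i S)" by (rule finite_subset) simp
  then show False using K assms(1-4) unfolding kwise_self_intersecting_def by blast
qed

lemma card_half_residues: "card {r. r < 2*k \<and> (r < k) = j} = k"
proof (cases j)
  case True
  then have "{r. r < 2*k \<and> (r < k) = j} = {..<k}" by auto
  then show ?thesis by simp
next
  case False
  then have "{r. r < 2*k \<and> (r < k) = j} = {k..<2*k}" by auto
  then show ?thesis by simp
qed

lemma card_le_if_distinct_residues_in_half:
  assumes "k \<ge> 1" "inj_on (\<lambda>x. x mod (2*k)) S" "\<forall>x\<in>S. (x mod (2*k) < k) = j"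
  shows "card S \<le> k"
proof -
  have "card S = card ((\<lambda>x. x mod (2*k)) ` S)" using assms(2) by (simp add: card_image)
  also have "\<dots> \<le> card {r. r < 2*k \<and> (r < k) = j}"
    using assms(1,3) by (intro card_mono) auto
  finally show ?thesis by (simp add: card_half_residues)
qed

lemma kwise_residue_coloring_in_half:
  assumes k: "k \<ge> 1" and K: "kwise_self_intersecting (residue_coloring k) i k X"
    and "y \<in> X"
  shows "(y mod (2*k) < k) = i"
proof (rule ccontr)
  define Y where "Y = {x \<in> X. (x mod (2*k) < k) \<noteq> i}"
  define rep where "rep = inv_into Y (\<lambda>x. x mod (2*k))"
  define S where "S = rep ` (\<lambda>x. x mod (2*k)) ` Y"
  assume "(y mod (2*k) < k) \<noteq> i"
  then have "y \<in> Y" unfolding Y_def using \<open>y \<in> X\<close> by blast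
  have rep_in_S: "rep (x mod (2*k)) \<in> S" if "x \<in> Y" for x
    unfolding S_def using that by blast
  have rep_in_Y: "rep (x mod (2*k)) \<in> Y" if "x \<in> Y" for x
    unfolding rep_def using that by (blast intro: inv_into_into)
  have rep_mod: "rep (x mod (2*k)) mod (2*k) = x mod (2*k)" if "x \<in> Y" for x
    unfolding rep_def using that f_inv_into_f[of "x mod (2*k)" "\<lambda>x. x mod (2*k)" Y] by blast
  have "S \<subseteq> Y" unfolding S_def using rep_in_Y by blast
  have "\<not> kwise_self_intersecting (residue_coloring k) i k X"
  proof (rule not_kwise_self_intersecting_if_blocked)
    show "S \<subseteq> X" using \<open>S \<subseteq> Y\<close> unfolding Y_def by blast
    show "S \<noteq> {}" using rep_in_S[OF \<open>y \<in> Y\<close>] by blast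
    have "(\<lambda>x. x mod (2*k)) ` Y \<subseteq> {..<2*k}" using k by auto
    then show "finite S" unfolding S_def by (blast intro: finite_subset)
    have "inj_on (\<lambda>x. x mod (2*k)) S"
      unfolding S_def by (rule inj_onI) (auto simp: rep_mod)
    then show "card S \<le> k"
      using k \<open>S \<subseteq> Y\<close> by (intro card_le_if_distinct_residues_in_half[where j = "\<not> i"])
        (auto simp: Y_def)
  next
    fix x assume "x \<in> X" and above: "\<forall>s\<in>S. s < x"
    show "\<exists>s\<in>S. residue_coloring k s x \<noteq> i"
    proof (cases "x \<in> Y")
      case True
      let ?s = "rep (x mod (2*k))"
      have "?s mod (2*k) = x mod (2*k)" "(x mod (2*k) < k) \<noteq> i"
        using True rep_mod unfolding Y_def by auto
      then have "residue_coloring k ?s x \<noteq> i"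
        using above rep_in_S[OF True] by (simp add: residue_coloring_less_eq)
      then show ?thesis using rep_in_S[OF True] by blast
    next
      case False
      let ?s = "rep (y mod (2*k))"
      have "(x mod (2*k) < k) = i" using False \<open>x \<in> X\<close> unfolding Y_def by blast
      moreover have "(?s mod (2*k) < k) \<noteq> i"
        using rep_in_Y[OF \<open>y \<in> Y\<close>] unfolding Y_def by blast
      ultimately have "?s mod (2*k) \<noteq> x mod (2*k)" by auto
      then have "residue_coloring k ?s x \<noteq> i"
        using above rep_in_S[OF \<open>y \<in> Y\<close>] \<open>(x mod (2*k) < k) = i\<close>
        by (simp add: residue_coloring_less_eq)
      then show ?thesis using rep_in_S[OF \<open>y \<in> Y\<close>] by blast
    qed
  qed
  then show False using K by blast
qed

lemma kwise_residue_coloring_single_residue: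
  assumes k: "k \<ge> 1" and K: "kwise_self_intersecting (residue_coloring k) i k X"
    and "x1 \<in> X" "x2 \<in> X"
  shows "x1 mod (2*k) = x2 mod (2*k)"
proof (rule ccontr)
  assume distinct: "x1 mod (2*k) \<noteq> x2 mod (2*k)"
  have half: "(x mod (2*k) < k) = i" if "x \<in> X" for x
    using kwise_residue_coloring_in_half[OF k K that] .
  have "\<not> kwise_self_intersecting (residue_coloring k) i k X"
  proof (rule not_kwise_self_intersecting_if_blocked)
    show "{x1, x2} \<subseteq> X" "{x1, x2} \<noteq> {}" "finite {x1, x2}"
      using \<open>x1 \<in> X\<close> \<open>x2 \<in> X\<close> by auto
    have "inj_on (\<lambda>x. x mod (2*k)) {x1, x2}" using distinct by auto
    then show "card {x1, x2} \<le> k"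
      using k half \<open>x1 \<in> X\<close> \<open>x2 \<in> X\<close> by (intro card_le_if_distinct_residues_in_half) auto
  next
    fix x assume "x \<in> X" and above: "\<forall>s\<in>{x1, x2}. s < x"
    have "x1 mod (2*k) \<noteq> x mod (2*k) \<or> x2 mod (2*k) \<noteq> x mod (2*k)" using distinct by auto
    then obtain s where "s \<in> {x1, x2}" "s mod (2*k) \<noteq> x mod (2*k)" by blast
    moreover have "s < x" using above \<open>s \<in> {x1, x2}\<close> by blast
    ultimately have "residue_coloring k s x \<noteq> i"
      using half[OF \<open>x \<in> X\<close>] by (simp add: residue_coloring_less_eq)
    then show "\<exists>s\<in>{x1, x2}. residue_coloring k s x \<noteq> i" using \<open>s \<in> {x1, x2}\<close> by blast
  qed
  then show False using K by blast
qed

lemma card_residue_class_le: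
  assumes "m > 0"
  shows "card {u \<in> {1..t}. u mod m = r} \<le> t div m + 1"
proof -
  have "inj_on (\<lambda>u. u div m) {u \<in> {1..t}. u mod m = r}"
    by (rule inj_onI) (metis (mono_tags) div_mult_mod_eq mem_Collect_eq)
  moreover have "(\<lambda>u. u div m) ` {u \<in> {1..t}. u mod m = r} \<subseteq> {0..t div m}"
    by (auto intro: div_le_mono)
  ultimately have "card {u \<in> {1..t}. u mod m = r} \<le> card {0..t div m}"
    by (rule card_inj_on_le) simp
  then show ?thesis by simp
qed

lemma upper_density_residue_class_le:
  assumes m: "m > 0" and X: "\<forall>x\<in>X. x mod m = r"
  shows "upper_density X \<le> ereal (1 / real m)"
proof -
  have "eventually (\<lambda>t. ereal (real (card (X \<inter> {1..t})) / real t)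
          \<le> ereal (1 / real m + 1 / real t)) sequentially"
  proof (rule eventually_sequentiallyI[of 1])
    fix t :: nat assume t: "t \<ge> 1"
    have "card (X \<inter> {1..t}) \<le> card {u \<in> {1..t}. u mod m = r}"
      using X by (intro card_mono) auto
    also have "\<dots> \<le> t div m + 1" using card_residue_class_le[OF m] .
    finally have "real (card (X \<inter> {1..t})) \<le> real (t div m) + 1" by linarith
    also have "real (t div m) \<le> real t / real m" by (rule of_nat_div_le_of_nat)
    finally have "real (card (X \<inter> {1..t})) / real t \<le> (real t / real m + 1) / real t"
      using t by (intro divide_right_mono) auto
    also have "\<dots> = 1 / real m + 1 / real t" using t m by (simp add: field_simps)
    finally show "ereal (real (card (X \<inter> {1..t})) / real t) \<le> ereal (1 / real m + 1 / real t)"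
      by simp
  qed
  then have "upper_density X \<le> limsup (\<lambda>t. ereal (1 / real m + 1 / real t))"
    unfolding upper_density_def by (rule Limsup_mono)
  also have "\<dots> = ereal (1 / real m)"
  proof (rule lim_imp_Limsup)
    have "((\<lambda>t. 1 / real m + 1 / real t) \<longlongrightarrow> 1 / real m + 0) sequentially"
      by (intro tendsto_intros lim_1_over_n)
    then show "((\<lambda>t. ereal (1 / real m + 1 / real t)) \<longlongrightarrow> ereal (1 / real m)) sequentially"
      by simp
  qed simp
  finally show ?thesis .
qed

theorem mainTheorem11:
  fixes k :: nat
  assumes "k \<ge> 1"
  shows "\<exists>c. two_coloring c \<and>
           (\<forall>i X. kwise_self_intersecting c i k X \<longrightarrow> upper_density X \<le> ereal (1 / (2 * real k)))"
proof (intro exI conjI allI impI)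
  show "two_coloring (residue_coloring k)" by (rule two_coloring_residue_coloring)
  fix i X assume K: "kwise_self_intersecting (residue_coloring k) i k X"
  obtain r where "\<forall>x\<in>X. x mod (2*k) = r"
    using kwise_residue_coloring_single_residue[OF assms K] by (cases "X = {}") blast+
  then show "upper_density X \<le> ereal (1 / (2 * real k))"
    using upper_density_residue_class_le[of "2*k" X r] assms by simp
qed

end
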